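(* Let $Q=\partial_\psi S$ and $R=\partial_\psi P_0$ be $\partial_\psi$-delta operators with $S,P_0\in\Sigma_\psi$ invertible, and let $(p_n)$ and $(r_n)$ be their respective $\partial_\psi$-basic polynomial sequences. Then for every $n>0$, $$p_n(x)=\hat x_\psi\,(P_0S^{-1})^n\,\hat x_\psi^{-1}\,r_n(x).$$
   Context: Let $F$ be a field of characteristic $0$, $P=F[x]$. Fix $(\psi_n)_{n\ge0}$ in $F$ with $\psi_0=1$, $\psi_n\ne0$, $\psi_{-1}=0$; $n_\psi=\psi_{n-1}/\psi_n$, $n_\psi!=1/\psi_n$, $0_\psi!=1$. $\partial_\psi x^n=n_\psi x^{n-1}$ (linear); $E^a(\partial_\psi)=\sum_k\frac{a^k}{k_\psi!}\partial_\psi^k$. $\Sigma_\psi$: algebra of linear operators on $P$ commuting with all $E^a(\partial_\psi)$. A $\partial_\psi$-delta operator is $Q\in\Sigma_\psi$ with $Q(x)$ a nonzero constant; its $\partial_\psi$-basic sequence: $\deg p_n=n$, $p_0=1$, $p_n(0)=0$ for $n>0$, $Qp_n=n_\psi p_{n-1}$. $\hat x_\psi x^n=\frac{n+1}{(n+1)_\psi}x^{n+1}$ (linear), and $\hat x_\psi^{-1}$ is its inverse on polynomials with zero constant term: $\hat x_\psi^{-1}x^n=\frac{n_\psi}{n}x^{n-1}$ for $n\ge1$. *)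

theory Defs
  imports "HOL-Computational_Algebra.Polynomial"
begin

text \<open>psi-integer n_psi = psi(n-1)/psi(n), with psi(-1) = 0, so 0_psi = 0.\<close>
definition psi_num :: "(nat \<Rightarrow> 'a::field) \<Rightarrow> nat \<Rightarrow> 'a" where
  "psi_num psi n = (if n = 0 then 0 else psi (n - 1) / psi n)"

definition psi_fact :: "(nat \<Rightarrow> 'a::field) \<Rightarrow> nat \<Rightarrow> 'a" where
  "psi_fact psi n = 1 / psi n"

definition admissible_psi :: "(nat \<Rightarrow> 'a::field) \<Rightarrow> bool" where
  "admissible_psi psi \<longleftrightarrow> psi 0 = 1 \<and> (\<forall>n. psi n \<noteq> 0)"

definition psi_deriv :: "(nat \<Rightarrow> 'a::field) \<Rightarrow> 'a poly \<Rightarrow> 'a poly" where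
  "psi_deriv psi p = (\<Sum>n\<le>degree p. smult (coeff p n * psi_num psi n) (monom 1 (n - 1)))"

text \<open>E^a(psi_deriv) = sum_k a^k / k_psi! psi_deriv^k (finite on each polynomial).\<close>
definition psi_shift :: "(nat \<Rightarrow> 'a::field) \<Rightarrow> 'a \<Rightarrow> 'a poly \<Rightarrow> 'a poly" where
  "psi_shift psi a p = (\<Sum>k\<le>degree p. smult (a ^ k / psi_fact psi k) ((psi_deriv psi ^^ k) p))"

definition lin_op :: "('a::field poly \<Rightarrow> 'a poly) \<Rightarrow> bool" where
  "lin_op T \<longleftrightarrow> (\<forall>p q. T (p + q) = T p + T q) \<and> (\<forall>c p. T (smult c p) = smult c (T p))"

definition Sigma_psi :: "(nat \<Rightarrow> 'a::field) \<Rightarrow> ('a poly \<Rightarrow> 'a poly) set" where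
  "Sigma_psi psi = {T. lin_op T \<and> (\<forall>a p. T (psi_shift psi a p) = psi_shift psi a (T p))}"

definition psi_delta :: "(nat \<Rightarrow> 'a::field) \<Rightarrow> ('a poly \<Rightarrow> 'a poly) \<Rightarrow> bool" where
  "psi_delta psi Q \<longleftrightarrow> Q \<in> Sigma_psi psi \<and> degree (Q [:0, 1:]) = 0 \<and> Q [:0, 1:] \<noteq> 0"

definition psi_basic_seq :: "(nat \<Rightarrow> 'a::field) \<Rightarrow> ('a poly \<Rightarrow> 'a poly) \<Rightarrow> (nat \<Rightarrow> 'a poly) \<Rightarrow> bool" where
  "psi_basic_seq psi Q p \<longleftrightarrow>
     (\<forall>n. degree (p n) = n) \<and> p 0 = 1 \<and> (\<forall>n>0. poly (p n) 0 = 0) \<and>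
     (\<forall>n. Q (p n) = smult (psi_num psi n) (p (n - 1)))"

definition psi_xhat :: "(nat \<Rightarrow> 'a::field_char_0) \<Rightarrow> 'a poly \<Rightarrow> 'a poly" where
  "psi_xhat psi p = (\<Sum>n\<le>degree p.
      smult (coeff p n * of_nat (n + 1) / psi_num psi (n + 1)) (monom 1 (n + 1)))"

text \<open>hat x_psi^{-1}: x^n \<mapsto> n_psi/n x^(n-1) for n \<ge> 1 (used on polys with zero constant term).\<close>
definition psi_xhat_inv :: "(nat \<Rightarrow> 'a::field_char_0) \<Rightarrow> 'a poly \<Rightarrow> 'a poly" where
  "psi_xhat_inv psi p = (\<Sum>n\<in>{1..degree p}.
      smult (coeff p n * psi_num psi n / of_nat n) (monom 1 (n - 1)))"

end

theory Submission
  imports Defs "HOL-Computational_Algebra.Formal_Power_Series"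
begin

text \<open>
  By the expansion theorem every operator in \<open>\<Sigma>\<^sub>\<psi>\<close> is a power series \<open>f(\<partial>\<^sub>\<psi>)\<close>, and
  \<open>f \<mapsto> f(\<partial>\<^sub>\<psi>)\<close> is multiplicative; so \<open>S = s(\<partial>\<^sub>\<psi>)\<close> and \<open>P\<^sub>0 = \<pi>(\<partial>\<^sub>\<psi>)\<close> with
  \<open>s(0), \<pi>(0) \<noteq> 0\<close>. As in the classical transfer formula, the basic sequence of
  \<open>Q = \<partial>\<^sub>\<psi> s(\<partial>\<^sub>\<psi>)\<close> is \<open>p\<^sub>n = h\<^sub>n(\<partial>\<^sub>\<psi>) x\<^sup>n\<close> with \<open>h\<^sub>n = (x s)' s\<^bsup>-n-1\<^esup>\<close>: both sides
  satisfy \<open>Q q\<^sub>n = n\<^sub>\<psi> q\<^sub>n\<^sub>-\<^sub>1\<close> and vanish at \<open>0\<close>, and \<open>Q\<close> is injective on such polynomials.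
  Since \<open>n h\<^sub>n = n s\<^bsup>-n\<^esup> - x (s\<^bsup>-n\<^esup>)'\<close>, comparing coefficients turns this into
  \<open>p\<^sub>n = psi_xhat (s(\<partial>\<^sub>\<psi>)\<^bsup>-n\<^esup> (psi_xhat_inv x\<^sup>n))\<close>. The same formula for \<open>r\<^sub>n\<close> gives
  \<open>psi_xhat_inv r\<^sub>n = \<pi>(\<partial>\<^sub>\<psi>)\<^bsup>-n\<^esup> (psi_xhat_inv x\<^sup>n)\<close>, and \<open>(P\<^sub>0 S\<^sup>-\<^sup>1)\<^sup>n\<close> maps this to
  \<open>s(\<partial>\<^sub>\<psi>)\<^bsup>-n\<^esup> (psi_xhat_inv x\<^sup>n)\<close>.\<close>

unbundle fps_syntax

lemma lin_op_zero: "lin_op T \<Longrightarrow> T 0 = 0"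
  unfolding lin_op_def by (metis smult_0_left)

lemma lin_op_sum:
  assumes "lin_op T" "finite A"
  shows "T (\<Sum>i\<in>A. f i) = (\<Sum>i\<in>A. T (f i))"
  using assms(2)
  by (induction A rule: finite_induct)
     (use assms(1) in \<open>auto simp: lin_op_zero lin_op_def\<close>)

lemma coeff_psi_deriv: "coeff (psi_deriv psi p) k = psi_num psi (k + 1) * coeff p (k + 1)"
proof -
  have "coeff (psi_deriv psi p) k =
      (\<Sum>n\<le>degree p. if n = k + 1 then psi_num psi n * coeff p n else 0)"
    unfolding psi_deriv_def coeff_sum by (rule sum.cong) (auto simp: psi_num_def)
  then show ?thesis by (simp add: sum.delta' coeff_eq_0)
qed

lemma coeff_psi_xhat:
  "coeff (psi_xhat psi p) k = (if k = 0 then 0 else of_nat k / psi_num psi k * coeff p (k - 1))"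
proof -
  have "coeff (psi_xhat psi p) k = (\<Sum>n\<le>degree p.
      if n = k - 1 then (if k = 0 then 0 else of_nat k / psi_num psi k * coeff p n) else 0)"
    unfolding psi_xhat_def coeff_sum by (rule sum.cong) auto
  then show ?thesis by (simp add: sum.delta' coeff_eq_0)
qed

lemma coeff_psi_xhat_inv:
  "coeff (psi_xhat_inv psi p) k = psi_num psi (k + 1) / of_nat (k + 1) * coeff p (k + 1)"
proof -
  have "coeff (psi_xhat_inv psi p) k = (\<Sum>n\<in>{1..degree p}.
      if n = k + 1 then psi_num psi n / of_nat n * coeff p n else 0)"
    unfolding psi_xhat_inv_def coeff_sum by (rule sum.cong) auto
  then show ?thesis by (simp add: sum.delta' coeff_eq_0)
qed

lemma psi_deriv_diff: "psi_deriv psi (p - q) = psi_deriv psi p - psi_deriv psi q"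
  by (rule poly_eqI) (simp add: coeff_psi_deriv algebra_simps)

lemma psi_deriv_monom: "psi_deriv psi (monom c n) = monom (psi_num psi n * c) (n - 1)"
  by (rule poly_eqI) (auto simp: coeff_psi_deriv coeff_monom psi_num_def)

lemma psi_xhat_inv_monom:
  "psi_xhat_inv psi (monom c n) = monom (psi_num psi n / of_nat n * c) (n - 1)"
  by (rule poly_eqI) (auto simp: coeff_psi_xhat_inv coeff_monom psi_num_def)

text \<open>
  The series of the transfer formula: for the delta operator \<open>Q = \<partial>\<^sub>\<psi> s(\<partial>\<^sub>\<psi>)\<close>
  it is \<open>Q'(\<partial>\<^sub>\<psi>) (\<partial>\<^sub>\<psi>/Q)\<^bsup>n+1\<^esup>\<close>.\<close>
definition transfer_series :: "'a::field fps \<Rightarrow> nat \<Rightarrow> 'a fps" where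
  "transfer_series s n = fps_deriv (fps_X * s) * inverse s ^ (n + 1)"

lemma transfer_series_0_nth_0:
  assumes "s $ 0 \<noteq> 0"
  shows "transfer_series s 0 $ 0 = 1"
proof -
  have "fps_deriv (fps_X * s) $ 0 = s $ 0"
    by (simp add: fps_deriv_mult)
  then show ?thesis
    using assms by (simp add: transfer_series_def)
qed

lemma mult_transfer_series_Suc:
  assumes "s $ 0 \<noteq> 0"
  shows "s * transfer_series s (Suc n) = transfer_series s n"
proof -
  have "s * inverse s ^ (Suc n + 1) = inverse s ^ (n + 1)"
    using assms by (simp add: mult.assoc[symmetric] inverse_mult_eq_1')
  then show ?thesis
    unfolding transfer_series_def by (simp only: mult.left_commute[of s])
qed

lemma transfer_series_nth:
  fixes s :: "'a::field_char_0 fps"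
  assumes s0: "s $ 0 \<noteq> 0" and "n > 0"
  shows "transfer_series s n $ j = (of_nat n - of_nat j) / of_nat n * (inverse s ^ n) $ j"
proof -
  define t where "t = inverse s"
  have st: "s * t = 1"
    using s0 by (simp add: t_def inverse_mult_eq_1')
  obtain m where m: "n = Suc m"
    using \<open>n > 0\<close> by (cases n) auto
  have "fps_deriv (t ^ n) = fps_const (of_nat n) * fps_deriv t * t ^ m"
    by (simp only: fps_deriv_power m diff_Suc_1)
  also have "\<dots> = - (fps_const (of_nat n) * fps_deriv s * t ^ (n + 1))"
    using s0 by (simp add: t_def fps_inverse_deriv m power2_eq_square mult_ac
        del: of_nat_Suc fps_const_neg)
  finally have dt: "fps_deriv (t ^ n) = - (fps_const (of_nat n) * fps_deriv s * t ^ (n + 1))" .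
  have "s * t ^ (n + 1) = t ^ n"
    by (simp add: st mult.assoc[symmetric])
  then have "transfer_series s n = t ^ n + fps_X * fps_deriv s * t ^ (n + 1)"
    by (simp add: transfer_series_def t_def distrib_right)
  then have "fps_const (of_nat n) * transfer_series s n =
      fps_const (of_nat n) * t ^ n - fps_X * fps_deriv (t ^ n)"
    by (simp add: dt algebra_simps)
  then have "(fps_const (of_nat n) * transfer_series s n) $ j =
      (fps_const (of_nat n) * t ^ n - fps_X * fps_deriv (t ^ n)) $ j"
    by simp
  then have "of_nat n * transfer_series s n $ j = of_nat n * (t ^ n) $ j - of_nat j * (t ^ n) $ j"
    by (cases j) (simp_all add: algebra_simps)
  moreover have "(of_nat n :: 'a) \<noteq> 0"
    using \<open>n > 0\<close> by simp
  ultimately show ?thesis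
    by (simp add: t_def field_simps)
qed

locale psi_calculus =
  fixes psi :: "nat \<Rightarrow> 'a::field_char_0"
  assumes admissible: "admissible_psi psi"
begin

lemma psi_0: "psi 0 = 1"
  and psi_nonzero: "psi n \<noteq> 0"
  using admissible by (auto simp: admissible_psi_def)

lemma psi_num_nonzero: "n > 0 \<Longrightarrow> psi_num psi n \<noteq> 0"
  by (simp add: psi_num_def psi_nonzero)

text \<open>
  Coordinates with respect to the basis \<open>x\<^sup>k / k\<^sub>\<psi>! = monom (psi k) k\<close>, on which
  \<open>\<partial>\<^sub>\<psi>\<close> acts as the shift \<open>k \<mapsto> k - 1\<close>.\<close>
definition psi_coeff :: "nat \<Rightarrow> 'a poly \<Rightarrow> 'a" where
  "psi_coeff k p = coeff p k / psi k"

lemma coeff_eq_psi_coeff: "coeff p k = psi k * psi_coeff k p"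
  by (simp add: psi_coeff_def psi_nonzero)

lemma psi_coeff_eqI: "(\<And>k. psi_coeff k p = psi_coeff k q) \<Longrightarrow> p = q"
  by (metis coeff_eq_psi_coeff poly_eqI)

lemma psi_coeff_eq_0: "degree p < k \<Longrightarrow> psi_coeff k p = 0"
  by (simp add: psi_coeff_def coeff_eq_0)

lemma psi_coeff_add [simp]: "psi_coeff k (p + q) = psi_coeff k p + psi_coeff k q"
  by (simp add: psi_coeff_def add_divide_distrib)

lemma psi_coeff_smult [simp]: "psi_coeff k (smult c p) = c * psi_coeff k p"
  by (simp add: psi_coeff_def)

lemma psi_coeff_sum [simp]: "psi_coeff k (\<Sum>i\<in>A. f i) = (\<Sum>i\<in>A. psi_coeff k (f i))"
  by (simp add: psi_coeff_def coeff_sum sum_divide_distrib)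

lemma psi_coeff_monom: "psi_coeff k (monom c n) = (if k = n then c / psi n else 0)"
  by (simp add: psi_coeff_def)

lemma psi_coeff_psi_deriv_funpow [simp]:
  "psi_coeff k ((psi_deriv psi ^^ j) p) = psi_coeff (k + j) p"
proof (induction j arbitrary: k)
  case (Suc j)
  then show ?case
    using psi_nonzero[of k] psi_nonzero[of "Suc k"]
    by (simp add: psi_coeff_def coeff_psi_deriv psi_num_def)
qed simp

lemma degree_psi_deriv_funpow: "degree ((psi_deriv psi ^^ k) p) \<le> degree p"
  by (rule degree_le) (simp add: coeff_eq_psi_coeff psi_coeff_eq_0)

lemma psi_coeff_psi_xhat [simp]: "psi_coeff k (psi_xhat psi p) = of_nat k * psi_coeff (k - 1) p"
  using psi_nonzero[of k] psi_nonzero[of "k - 1"]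
  by (cases k) (simp_all add: psi_coeff_def coeff_psi_xhat psi_num_def)

lemma psi_xhat_inv_psi_xhat [simp]: "psi_xhat_inv psi (psi_xhat psi p) = p"
  by (rule poly_eqI)
     (simp add: coeff_psi_xhat_inv coeff_psi_xhat psi_num_nonzero del: of_nat_Suc)

text \<open>
  The operator \<open>f(\<partial>\<^sub>\<psi>)\<close>; truncating the series at \<open>degree p\<close> loses nothing, since
  \<open>\<partial>\<^sub>\<psi>\<^sup>j p = 0\<close> beyond it.\<close>
definition psi_op :: "'a fps \<Rightarrow> 'a poly \<Rightarrow> 'a poly" where
  "psi_op f p = (\<Sum>j\<le>degree p. smult (f $ j) ((psi_deriv psi ^^ j) p))"

lemma psi_coeff_psi_op:
  assumes "degree p \<le> N"
  shows "psi_coeff k (psi_op f p) = (\<Sum>j\<le>N. f $ j * psi_coeff (k + j) p)"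
  unfolding psi_op_def psi_coeff_sum psi_coeff_smult psi_coeff_psi_deriv_funpow
  by (rule sum.mono_neutral_left) (use assms in \<open>auto simp: psi_coeff_eq_0\<close>)

lemma degree_psi_op: "degree (psi_op f p) \<le> degree p"
proof (rule degree_le, intro allI impI)
  fix i
  assume "degree p < i"
  then show "coeff (psi_op f p) i = 0"
    by (simp add: coeff_eq_psi_coeff psi_coeff_psi_op[of p "degree p"] psi_coeff_eq_0)
qed

lemma psi_op_add: "psi_op f (p + q) = psi_op f p + psi_op f q"
proof (rule psi_coeff_eqI)
  fix k
  let ?N = "max (degree p) (degree q)"
  have "degree (p + q) \<le> ?N"
    by (rule degree_add_le) auto
  then show "psi_coeff k (psi_op f (p + q)) = psi_coeff k (psi_op f p + psi_op f q)"
    by (simp add: psi_coeff_psi_op[of _ ?N] distrib_left sum.distrib)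
qed

lemma psi_op_smult: "psi_op f (smult c p) = smult c (psi_op f p)"
  by (rule psi_coeff_eqI)
     (simp add: psi_coeff_psi_op[of _ "degree p"] sum_distrib_left ac_simps)

lemma psi_op_diff: "psi_op f (p - q) = psi_op f p - psi_op f q"
  using psi_op_add[of f "p - q" q] by simp

lemma psi_op_const: "degree p = 0 \<Longrightarrow> psi_op f p = smult (f $ 0) p"
  by (simp add: psi_op_def)

lemma psi_op_mult: "psi_op f (psi_op g p) = psi_op (f * g) p"
proof (rule psi_coeff_eqI)
  fix k
  define N where "N = degree p"
  have deg: "degree p \<le> N" "degree (psi_op g p) \<le> N"
    using degree_psi_op[of g p] by (auto simp: N_def)
  have "psi_coeff k (psi_op f (psi_op g p)) =
      (\<Sum>i\<le>N. \<Sum>j\<le>N. f $ i * g $ j * psi_coeff (k + i + j) p)"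
    by (simp add: psi_coeff_psi_op[OF deg(2)] psi_coeff_psi_op[OF deg(1)] sum_distrib_left ac_simps)
  also have "\<dots> = (\<Sum>(i, j)\<in>{..N} \<times> {..N}. f $ i * g $ j * psi_coeff (k + i + j) p)"
    by (rule sum.cartesian_product)
  also have "\<dots> = (\<Sum>(i, j)\<in>{(i, j). i + j \<le> N}. f $ i * g $ j * psi_coeff (k + i + j) p)"
    by (rule sum.mono_neutral_right)
       (auto simp: N_def, metis psi_coeff_eq_0 add.assoc le_add2 not_le order.trans)
  also have "\<dots> = (\<Sum>m\<le>N. \<Sum>i\<le>m. f $ i * g $ (m - i) * psi_coeff (k + i + (m - i)) p)"
    by (rule sum.triangle_reindex_eq)
  also have "\<dots> = (\<Sum>m\<le>N. (f * g) $ m * psi_coeff (k + m) p)"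
    by (rule sum.cong) (auto simp: fps_mult_nth atLeast0AtMost sum_distrib_right intro!: sum.cong)
  also have "\<dots> = psi_coeff k (psi_op (f * g) p)"
    by (simp add: psi_coeff_psi_op[OF deg(1)])
  finally show "psi_coeff k (psi_op f (psi_op g p)) = psi_coeff k (psi_op (f * g) p)" .
qed

lemma psi_op_comp: "psi_op f \<circ> psi_op g = psi_op (f * g)"
  by (rule ext) (simp add: psi_op_mult)

lemma psi_op_one: "psi_op 1 = id"
proof
  fix p
  have "(\<Sum>j\<le>degree p. (1 :: 'a fps) $ j * psi_coeff (k + j) p) =
      (\<Sum>j\<le>degree p. if j = 0 then psi_coeff k p else 0)" for k
    by (rule sum.cong) auto
  then show "psi_op 1 p = id p"
    by (intro psi_coeff_eqI) (simp add: psi_coeff_psi_op[of p "degree p"])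
qed

lemma psi_op_funpow: "psi_op f ^^ n = psi_op (f ^ n)"
  by (induction n) (simp_all add: psi_op_one psi_op_comp)

lemma psi_op_X: "psi_op fps_X p = psi_deriv psi p"
proof (rule psi_coeff_eqI)
  fix k
  have "(\<Sum>j\<le>Suc (degree p). fps_X $ j * psi_coeff (k + j) p) =
      (\<Sum>j\<le>Suc (degree p). if j = 1 then psi_coeff (Suc k) p else 0)"
    by (rule sum.cong) auto
  then show "psi_coeff k (psi_op fps_X p) = psi_coeff k (psi_deriv psi p)"
    using psi_coeff_psi_deriv_funpow[of k 1 p]
    by (simp add: psi_coeff_psi_op[of p "Suc (degree p)"])
qed

lemma psi_coeff_psi_op_monom:
  "psi_coeff k (psi_op g (monom c n)) = (if k \<le> n then g $ (n - k) * c / psi n else 0)"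
proof -
  have "psi_coeff k (psi_op g (monom c n)) =
      (\<Sum>j\<le>n. if j = n - k \<and> k \<le> n then g $ j * c / psi n else 0)"
    by (simp add: psi_coeff_psi_op[of _ n] degree_monom_le psi_coeff_monom)
       (rule sum.cong, auto)
  then show ?thesis
    by (auto simp: sum.delta' cong: conj_cong)
qed

lemma poly_psi_shift_0: "poly (psi_shift psi a q) 0 = poly q a"
proof -
  have "coeff ((psi_deriv psi ^^ k) q) 0 = coeff q k / psi k" for k
    using psi_coeff_psi_deriv_funpow[of 0 k q] by (simp add: psi_coeff_def psi_0)
  then have "poly (psi_shift psi a q) 0 = (\<Sum>k\<le>degree q. a ^ k * coeff q k)"
    by (simp add: psi_shift_def poly_0_coeff_0 coeff_sum psi_fact_def psi_nonzero)
  then show ?thesis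
    by (simp add: poly_altdef mult.commute)
qed

text \<open>
  The series of the expansion theorem \<open>T = \<Sum>\<^sub>k (T x\<^sup>k / k\<^sub>\<psi>!)(0) \<partial>\<^sub>\<psi>\<^sup>k\<close>
  for \<open>T \<in> \<Sigma>\<^sub>\<psi>\<close>.\<close>
definition op_series :: "('a poly \<Rightarrow> 'a poly) \<Rightarrow> 'a fps" where
  "op_series T = Abs_fps (\<lambda>k. psi k * poly (T (monom 1 k)) 0)"

lemma poly_lin_op_0:
  assumes "lin_op T" "degree q \<le> N"
  shows "poly (T q) 0 = (\<Sum>m\<le>N. psi_coeff m q * op_series T $ m)"
proof -
  have "T q = T (\<Sum>m\<le>degree q. smult (coeff q m) (monom 1 m))"
    by (simp add: smult_monom poly_as_sum_of_monoms)
  also have "\<dots> = (\<Sum>m\<le>degree q. smult (coeff q m) (T (monom 1 m)))"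
    using assms(1) by (simp add: lin_op_sum lin_op_def)
  finally have "poly (T q) 0 = (\<Sum>m\<le>degree q. psi_coeff m q * op_series T $ m)"
    by (simp add: poly_sum op_series_def coeff_eq_psi_coeff ac_simps)
  also have "\<dots> = (\<Sum>m\<le>N. psi_coeff m q * op_series T $ m)"
    by (rule sum.mono_neutral_left) (use assms(2) in \<open>auto simp: psi_coeff_eq_0\<close>)
  finally show ?thesis .
qed

theorem psi_op_expansion:
  assumes "T \<in> Sigma_psi psi"
  shows "T = psi_op (op_series T)"
proof
  fix p :: "'a poly"
  have lin: "lin_op T" and comm: "\<And>a q. T (psi_shift psi a q) = psi_shift psi a (T q)"
    using assms by (auto simp: Sigma_psi_def)
  define D where "D = degree p"
  have poly_T_deriv: "poly (T ((psi_deriv psi ^^ k) p)) 0 =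
      (\<Sum>m\<le>D. psi_coeff (m + k) p * op_series T $ m)" for k
    using poly_lin_op_0[OF lin degree_psi_deriv_funpow] by (simp add: D_def)
  have "poly (T p) a = poly (psi_op (op_series T) p) a" for a
  proof -
    have "poly (T p) a = poly (T (psi_shift psi a p)) 0"
      by (simp add: comm poly_psi_shift_0)
    also have "\<dots> = (\<Sum>k\<le>D. a ^ k * psi k * poly (T ((psi_deriv psi ^^ k) p)) 0)"
      using lin by (simp add: psi_shift_def lin_op_sum lin_op_def poly_sum D_def psi_fact_def)
    also have "\<dots> =
        (\<Sum>k\<le>D. a ^ k * psi k * (\<Sum>m\<le>D. psi_coeff (m + k) p * op_series T $ m))"
      by (simp only: poly_T_deriv)
    also have "\<dots> = (\<Sum>k\<le>D. coeff (psi_op (op_series T) p) k * a ^ k)"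
      by (intro sum.cong refl)
         (simp add: coeff_eq_psi_coeff psi_coeff_psi_op[of p D] D_def sum_distrib_left ac_simps)
    also have "\<dots> = poly (\<Sum>k\<le>D. monom (coeff (psi_op (op_series T) p) k) k) a"
      by (simp add: poly_sum poly_monom)
    also have "\<dots> = poly (psi_op (op_series T) p) a"
      by (simp only: poly_as_sum_of_monoms' degree_psi_op D_def)
    finally show ?thesis .
  qed
  then show "T p = psi_op (op_series T) p"
    using poly_eq_poly_eq_iff by blast
qed

lemma invertible_Sigma_psi:
  assumes "T \<in> Sigma_psi psi" "bij T"
  obtains f where "T = psi_op f" "f $ 0 \<noteq> 0" "inv T = psi_op (inverse f)"
proof -
  obtain f where T: "T = psi_op f"
    using psi_op_expansion[OF assms(1)] by blast
  have nz: "f $ 0 \<noteq> 0"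
  proof
    assume "f $ 0 = 0"
    then have "T 1 = T 0"
      by (simp add: T psi_op_const)
    then show False
      using bij_is_inj[OF assms(2)] by (simp add: inj_eq)
  qed
  have "inv T = psi_op (inverse f)"
    by (rule inv_unique_comp)
       (simp_all add: T psi_op_comp psi_op_one inverse_mult_eq_1 inverse_mult_eq_1' nz)
  with T nz show thesis
    using that by blast
qed

lemma degree_0_if_psi_deriv_eq_0:
  assumes "psi_deriv psi e = 0"
  shows "degree e = 0"
proof (rule degree_le[of 0, simplified], intro allI impI)
  fix i :: nat
  assume "0 < i"
  then have "psi_num psi i * coeff e i = coeff (psi_deriv psi e) (i - 1)"
    by (simp add: coeff_psi_deriv)
  then show "coeff e i = 0"
    using assms \<open>0 < i\<close> psi_num_nonzero[of i] by simp
qed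

lemma eq_0_if_psi_deriv_psi_op_eq_0:
  assumes s0: "s $ 0 \<noteq> 0" and "psi_deriv psi (psi_op s d) = 0" and "poly d 0 = 0"
  shows "d = 0"
proof -
  have "degree (psi_op s d) = 0"
    using assms(2) by (rule degree_0_if_psi_deriv_eq_0)
  moreover have "d = psi_op (inverse s) (psi_op s d)"
    using s0 by (simp add: psi_op_mult psi_op_one inverse_mult_eq_1)
  ultimately have "degree d = 0"
    by (metis psi_op_const degree_smult_le le_zero_eq)
  then show ?thesis
    using assms(3) by (metis degree_0_id poly_0_coeff_0 pCons_0_0)
qed

lemma psi_basic_seq_eq_transfer_series:
  assumes s0: "s $ 0 \<noteq> 0" and basic: "psi_basic_seq psi (psi_deriv psi \<circ> psi_op s) p"
  shows "p n = psi_op (transfer_series s n) (monom 1 n)"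
proof (induction n)
  case 0
  have "p 0 = 1"
    using basic by (simp add: psi_basic_seq_def)
  then show ?case
    using transfer_series_0_nth_0[OF s0] by (simp add: psi_op_const)
next
  case (Suc m)
  let ?q = "psi_op (transfer_series s (Suc m)) (monom 1 (Suc m))"
  have "psi_deriv psi (psi_op s ?q) =
      psi_op (fps_X * (s * transfer_series s (Suc m))) (monom 1 (Suc m))"
    by (simp only: psi_op_X[symmetric] psi_op_mult mult.assoc)
  also have "\<dots> = psi_op (transfer_series s m) (psi_deriv psi (monom 1 (Suc m)))"
    by (simp only: mult_transfer_series_Suc[OF s0] mult.commute[of fps_X]
        flip: psi_op_mult psi_op_X)
  also have "\<dots> = smult (psi_num psi (Suc m)) (p m)"
    by (simp only: psi_deriv_monom diff_Suc_1 psi_op_smult Suc.IH flip: smult_monom)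
  finally have "psi_deriv psi (psi_op s ?q) = smult (psi_num psi (Suc m)) (p m)" .
  moreover have "psi_deriv psi (psi_op s (p (Suc m))) = smult (psi_num psi (Suc m)) (p m)"
    using basic by (simp add: psi_basic_seq_def)
  ultimately have "psi_deriv psi (psi_op s (p (Suc m) - ?q)) = 0"
    by (simp add: psi_op_diff psi_deriv_diff)
  moreover have "poly ?q 0 = 0"
    using transfer_series_nth[OF s0, of "Suc m" "Suc m"]
    by (simp add: poly_0_coeff_0 coeff_eq_psi_coeff psi_coeff_psi_op_monom)
  then have "poly (p (Suc m) - ?q) 0 = 0"
    using basic by (simp add: psi_basic_seq_def)
  ultimately have "p (Suc m) - ?q = 0"
    by (rule eq_0_if_psi_deriv_psi_op_eq_0[OF s0])
  then show ?case
    by simp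
qed

lemma psi_op_transfer_series_monom:
  assumes s0: "s $ 0 \<noteq> 0" and "n > 0"
  shows "psi_op (transfer_series s n) (monom c n) =
    psi_xhat psi (psi_op (inverse s ^ n) (psi_xhat_inv psi (monom c n)))"
proof (rule psi_coeff_eqI)
  fix k
  show "psi_coeff k (psi_op (transfer_series s n) (monom c n)) =
    psi_coeff k (psi_xhat psi (psi_op (inverse s ^ n) (psi_xhat_inv psi (monom c n))))"
  proof (cases "k = 0")
    case True
    then show ?thesis
      using assms by (simp add: psi_coeff_psi_op_monom transfer_series_nth)
  next
    case False
    show ?thesis
    proof (cases "k \<le> n")
      case True
      let ?t = "(inverse s ^ n) $ (n - k)"
      have "psi_coeff k (psi_op (transfer_series s n) (monom c n)) =
          of_nat k / of_nat n * ?t * c / psi n"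
        using True assms by (simp add: psi_coeff_psi_op_monom transfer_series_nth of_nat_diff)
      moreover have "n - 1 - (k - 1) = n - k"
        using False by simp
      then have "psi_coeff k
          (psi_xhat psi (psi_op (inverse s ^ n) (psi_xhat_inv psi (monom c n)))) =
          of_nat k * (?t * (psi_num psi n / of_nat n * c) / psi (n - 1))"
        using True by (simp add: psi_coeff_psi_op_monom psi_xhat_inv_monom)
      moreover have "psi_num psi n = psi (n - 1) / psi n"
        using \<open>n > 0\<close> by (simp add: psi_num_def)
      ultimately show ?thesis
        using False psi_nonzero[of "n - 1"] psi_nonzero[of n] by (simp add: ac_simps)
    next
      case False
      then show ?thesis
        using \<open>k \<noteq> 0\<close> \<open>n > 0\<close> by (simp add: psi_coeff_psi_op_monom psi_xhat_inv_monom)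
    qed
  qed
qed

theorem psi_basic_seq_transfer_formula:
  assumes "s $ 0 \<noteq> 0" and "psi_basic_seq psi (psi_deriv psi \<circ> psi_op s) p" and "n > 0"
  shows "p n = psi_xhat psi (psi_op (inverse s ^ n) (psi_xhat_inv psi (monom 1 n)))"
  using assms by (simp add: psi_basic_seq_eq_transfer_series psi_op_transfer_series_monom)

end

theorem mainTheorem12:
  fixes psi :: "nat \<Rightarrow> 'a::field_char_0"
    and S P0 :: "'a poly \<Rightarrow> 'a poly"
    and p r :: "nat \<Rightarrow> 'a poly"
  assumes "admissible_psi psi"
    and "S \<in> Sigma_psi psi" and "bij S"
    and "P0 \<in> Sigma_psi psi" and "bij P0"
    and "psi_delta psi (psi_deriv psi \<circ> S)"
    and "psi_delta psi (psi_deriv psi \<circ> P0)"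
    and "psi_basic_seq psi (psi_deriv psi \<circ> S) p"
    and "psi_basic_seq psi (psi_deriv psi \<circ> P0) r"
  shows "\<forall>n>0. p n = psi_xhat psi (((P0 \<circ> inv S) ^^ n) (psi_xhat_inv psi (r n)))"
proof (intro allI impI)
  fix n :: nat
  assume "n > 0"
  interpret psi_calculus psi
    by unfold_locales (rule assms(1))
  obtain s where S: "S = psi_op s" "s $ 0 \<noteq> 0" "inv S = psi_op (inverse s)"
    using invertible_Sigma_psi[OF assms(2,3)] .
  obtain \<pi> where P0: "P0 = psi_op \<pi>" "\<pi> $ 0 \<noteq> 0"
    using invertible_Sigma_psi[OF assms(4,5)] by blast
  define u where "u = psi_xhat_inv psi (monom 1 n)"
  have p: "p n = psi_xhat psi (psi_op (inverse s ^ n) u)"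
    using assms(8) unfolding S(1) u_def
    by (rule psi_basic_seq_transfer_formula[OF S(2) _ \<open>n > 0\<close>])
  have r: "r n = psi_xhat psi (psi_op (inverse \<pi> ^ n) u)"
    using assms(9) unfolding P0(1) u_def
    by (rule psi_basic_seq_transfer_formula[OF P0(2) _ \<open>n > 0\<close>])
  have "(P0 \<circ> inv S) ^^ n = psi_op ((\<pi> * inverse s) ^ n)"
    by (simp only: P0(1) S(3) psi_op_comp psi_op_funpow)
  then have "((P0 \<circ> inv S) ^^ n) (psi_xhat_inv psi (r n)) =
      psi_op ((\<pi> * inverse s) ^ n * inverse \<pi> ^ n) u"
    by (simp add: r psi_op_mult)
  also have "(\<pi> * inverse s) ^ n * inverse \<pi> ^ n = (\<pi> * inverse \<pi>) ^ n * inverse s ^ n"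
    by (simp only: power_mult_distrib mult_ac)
  also have "\<dots> = inverse s ^ n"
    using P0(2) by (simp add: inverse_mult_eq_1')
  finally show "p n = psi_xhat psi (((P0 \<circ> inv S) ^^ n) (psi_xhat_inv psi (r n)))"
    by (simp only: p)
qed

end
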